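(* Let $P$ be a distribution on $\mathcal X\times\mathcal Y$, where every $\mathbf x\in\mathcal X\subseteq\mathbb R^d$ satisfies $\|\mathbf x\|\le1$ and $\mathcal Y=\{-1,+1\}$ or $[-1,1]$, and let $(\mathbf x_1,y_1),\dots,(\mathbf x_n,y_n)$ be i.i.d. from $P$. Let $R>0$, $\mathscr W=\{\mathbf w\in\mathbb R^d:\|\mathbf w\|\le R\}$, let $\ell:\mathbb R\to\mathbb R_+$ be a convex, $\alpha$-exp-concave on $|z|\le R$, $G$-Lipschitz loss, and $\mathbf w_*\in\arg\min_{\mathscr W}\mathrm E[\ell(y\mathbf w^\top\mathbf x)]$. For $\mathbf w\in\mathscr W$ let $\rho(\mathbf w)=\frac1{2R}\sqrt{\mathrm E[(\mathbf x^\top(\mathbf w-\mathbf w_* ))^2]}$. For $\rho>0$ define $\Delta=\{\mathbf w\in\mathscr W:\rho(\mathbf w)\le\rho\}$. Then for any $t>0$, with probability at least $1-e^{-t}$, \[ \frac1n\sup_{\mathbf w\in\Delta}\sum_{i=1}^n\left[\mathbf x_i^\top(\mathbf w-\mathbf w_* )\right]^2\le10R^2\left(\rho^2+\frac{t+1+d\log n}{n}\right). \]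
   Context: $\alpha$-exp-concave means $z\mapsto\exp(-\alpha\ell(z))$ is concave; $G$-Lipschitz means $|\ell'(z)|\le G$. Expectations are over $(\mathbf x,y)\sim P$. *)

theory Defs
  imports "HOL-Probability.Probability"
begin

definition exp_risk :: "('a::euclidean_space \<times> real) measure \<Rightarrow> (real \<Rightarrow> real) \<Rightarrow> 'a \<Rightarrow> real" where
  "exp_risk P l w = (\<integral>z. l (snd z * (w \<bullet> fst z)) \<partial>P)"

definition rho_dist :: "('a::euclidean_space \<times> real) measure \<Rightarrow> real \<Rightarrow> 'a \<Rightarrow> 'a \<Rightarrow> real" where
  "rho_dist P R wstar w = (1 / (2 * R)) * sqrt (\<integral>z. (fst z \<bullet> (w - wstar))^2 \<partial>P)"

end

theory Submission
  imports Defs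
begin

(*
  Discretise the ball of radius 2R around wstar by a coordinate grid of mesh 2R/n: there are at
  most (2n+1)^d cells, and two points of one cell are at squared distance at most 4dR^2/n^2.
  For one representative w' per cell the truncated summands min 1 ((x_i . (w' - wstar))^2 / 4R^2)
  are i.i.d. in [0,1] with mean at most rho^2, so a Chernoff bound and a union bound over the
  cells control all of them simultaneously with probability 1 - exp(-t).  The inequality
  (a + b)^2 <= 7/5 a^2 + 7/2 b^2 transfers the bound from the representative to its whole cell.
  For n <= 7 the trivial bound 4R^2 per summand already suffices.
*)

lemma exp_le_affine_on_unit_interval:
  fixes x :: real
  assumes "0 \<le> x" "x \<le> 1"
  shows "exp x \<le> 1 + (exp 1 - 1) * x"
  using convex_onD[OF exp_convex, of x 0 1] assms by (simp add: algebra_simps)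

lemma measure_PiM_sum_ge_le_exp:
  fixes f :: "'b \<Rightarrow> real"
  assumes P: "prob_space P" and I: "finite I" and f: "f \<in> borel_measurable P"
    and f_01: "\<And>z. z \<in> space P \<Longrightarrow> 0 \<le> f z \<and> f z \<le> 1"
  shows "measure (PiM I (\<lambda>_. P))
     {S \<in> space (PiM I (\<lambda>_. P)). (exp 1 - 1) * card I * (\<integral>z. f z \<partial>P) + s \<le> (\<Sum>i\<in>I. f (S i))}
     \<le> exp (- s)"
proof -
  interpret P: prob_space P by (rule P)
  interpret PP: product_prob_space "\<lambda>_. P" I by unfold_locales
  let ?M = "PiM I (\<lambda>_. P)"
  define \<mu> where "\<mu> = (\<integral>z. f z \<partial>P)"
  define c where "c = (exp 1 - 1) * card I * \<mu> + s"
  let ?A = "{S \<in> space ?M. c \<le> (\<Sum>i\<in>I. f (S i))}"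
  have A: "?A \<in> sets ?M" using f by measurable
  have f_int: "integrable P f"
    using f f_01 by (intro P.integrable_const_bound[where B=1]) auto
  have mgf: "(\<integral>\<^sup>+ z. exp (f z) \<partial>P) \<le> exp ((exp 1 - 1) * \<mu>)"
  proof -
    have "(\<integral>\<^sup>+ z. exp (f z) \<partial>P) \<le> (\<integral>\<^sup>+ z. ennreal (1 + (exp 1 - 1) * f z) \<partial>P)"
      by (intro nn_integral_mono ennreal_leI exp_le_affine_on_unit_interval) (use f_01 in auto)
    also have "\<dots> = ennreal (\<integral>z. 1 + (exp 1 - 1) * f z \<partial>P)"
      using f_int f_01 by (intro nn_integral_eq_integral) auto
    also have "\<dots> = ennreal (1 + (exp 1 - 1) * \<mu>)"
      using f_int unfolding \<mu>_def by (simp add: P.prob_space)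
    also have "\<dots> \<le> exp ((exp 1 - 1) * \<mu>)"
      by (intro ennreal_leI exp_ge_add_one_self)
    finally show ?thesis .
  qed
  \<comment> \<open>Markov's inequality for the exponential of the sum, which factorises under the product measure.\<close>
  have "emeasure ?M ?A \<le> (\<integral>\<^sup>+ S. exp (- c) * (\<Prod>i\<in>I. ennreal (exp (f (S i)))) \<partial>?M)"
  proof (subst nn_integral_indicator[OF A, symmetric], rule nn_integral_mono)
    fix S assume "S \<in> space ?M"
    have "indicator ?A S \<le> ennreal (exp ((\<Sum>i\<in>I. f (S i)) - c))"
      by (auto simp: indicator_def)
    also have "exp ((\<Sum>i\<in>I. f (S i)) - c) = exp (- c) * (\<Prod>i\<in>I. exp (f (S i)))"
      using I by (simp add: exp_diff exp_sum exp_minus field_simps)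
    finally show "indicator ?A S \<le> exp (- c) * (\<Prod>i\<in>I. ennreal (exp (f (S i))))"
      by (simp add: ennreal_mult prod_ennreal prod_nonneg)
  qed
  also have "\<dots> = exp (- c) * (\<Prod>i\<in>I. \<integral>\<^sup>+ z. exp (f z) \<partial>P)"
    using f I
    by (subst nn_integral_cmult, measurable,
        subst PP.product_nn_integral_prod[where f="\<lambda>_ z. ennreal (exp (f z))"]) auto
  also have "\<dots> \<le> exp (- c) * (\<Prod>i\<in>I. ennreal (exp ((exp 1 - 1) * \<mu>)))"
    using mgf by (intro mult_left_mono) (auto intro: power_mono)
  also have "\<dots> = exp (- s)"
  proof -
    have "exp (- c) * exp ((exp 1 - 1) * \<mu>) ^ card I = exp (- s)"
      by (simp add: c_def exp_of_nat_mult[symmetric] exp_add[symmetric] algebra_simps)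
    thus ?thesis by (simp add: ennreal_power ennreal_mult[symmetric])
  qed
  finally show ?thesis
    unfolding c_def \<mu>_def measure_def by (intro enn2real_leI) auto
qed

lemma measure_PiM_sum_lt_for_finite_family:
  fixes F :: "('b \<Rightarrow> real) set" and t N :: real
  assumes P: "prob_space P" and I: "finite I" and F: "finite F" "real (card F) \<le> N" and N: "N > 0"
    and F_meas: "\<And>f. f \<in> F \<Longrightarrow> f \<in> borel_measurable P"
    and F_01: "\<And>f z. f \<in> F \<Longrightarrow> z \<in> space P \<Longrightarrow> 0 \<le> f z \<and> f z \<le> 1"
  defines "E \<equiv> {S \<in> space (PiM I (\<lambda>_. P)).
    \<forall>f\<in>F. (\<Sum>i\<in>I. f (S i)) < (exp 1 - 1) * card I * (\<integral>z. f z \<partial>P) + (t + ln N)}"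
  shows "E \<in> sets (PiM I (\<lambda>_. P))" and "measure (PiM I (\<lambda>_. P)) E \<ge> 1 - exp (- t)"
proof -
  let ?M = "PiM I (\<lambda>_. P)"
  interpret M: prob_space ?M by (rule prob_space_PiM) (use P in auto)
  define Bad where "Bad f = {S \<in> space ?M.
    (exp 1 - 1) * card I * (\<integral>z. f z \<partial>P) + (t + ln N) \<le> (\<Sum>i\<in>I. f (S i))}" for f
  have Bad: "Bad f \<in> sets ?M" if "f \<in> F" for f
    unfolding Bad_def using F_meas[OF that] by measurable
  have E_eq: "E = space ?M - (\<Union>f\<in>F. Bad f)"
    by (auto simp: E_def Bad_def not_le)
  have UBad: "(\<Union>f\<in>F. Bad f) \<in> sets ?M" using F Bad by auto
  then show "E \<in> sets ?M" unfolding E_eq by auto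
  have "measure ?M (\<Union>f\<in>F. Bad f) \<le> (\<Sum>f\<in>F. measure ?M (Bad f))"
    using F Bad by (intro M.finite_measure_subadditive_finite) auto
  also have "\<dots> \<le> (\<Sum>f\<in>F. exp (- t) / N)"
  proof (rule sum_mono)
    fix f assume "f \<in> F"
    have "measure ?M (Bad f) \<le> exp (- (t + ln N))"
      unfolding Bad_def using P I F_meas F_01 \<open>f \<in> F\<close> by (intro measure_PiM_sum_ge_le_exp) auto
    also have "\<dots> = exp (- t) / N" using N exp_diff[of "- t" "ln N"] by simp
    finally show "measure ?M (Bad f) \<le> exp (- t) / N" .
  qed
  also have "\<dots> \<le> exp (- t)" using F N by (simp add: field_simps)
  finally show "measure ?M E \<ge> 1 - exp (- t)"
    unfolding E_eq using UBad M.prob_compl by simp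
qed

lemma AE_PiM_all_components:
  assumes P: "prob_space P" and I: "finite I"
    and Q: "{z \<in> space P. Q z} \<in> sets P" "AE z in P. Q z"
  defines "G \<equiv> {S \<in> space (PiM I (\<lambda>_. P)). \<forall>i\<in>I. Q (S i)}"
  shows "G \<in> sets (PiM I (\<lambda>_. P))" and "AE S in PiM I (\<lambda>_. P). S \<in> G"
proof -
  show "G \<in> sets (PiM I (\<lambda>_. P))"
    unfolding G_def using I Q(1) by measurable
  have "AE S in PiM I (\<lambda>_. P). \<forall>i\<in>I. Q (S i)"
    using P I Q(2) by (intro eventually_ball_finite ballI AE_PiM_component) auto
  with AE_space show "AE S in PiM I (\<lambda>_. P). S \<in> G"
    unfolding G_def by eventually_elim auto
qed

lemma abs_diff_le_if_floor_divide_eq: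
  fixes p q h :: real
  assumes "h > 0" "\<lfloor>p / h\<rfloor> = \<lfloor>q / h\<rfloor>"
  shows "\<bar>p - q\<bar> \<le> h"
proof -
  have "\<bar>p / h - q / h\<bar> \<le> 1"
    using floor_correct[of "p / h"] floor_correct[of "q / h"] assms(2) by linarith
  with assms(1) show ?thesis by (simp add: diff_divide_distrib[symmetric] abs_divide)
qed

lemma norm_diff_power2_le_if_floor_divide_eq:
  fixes u v :: "'a::euclidean_space" and h :: real
  assumes "h > 0" "\<And>b. b \<in> Basis \<Longrightarrow> \<lfloor>(u \<bullet> b) / h\<rfloor> = \<lfloor>(v \<bullet> b) / h\<rfloor>"
  shows "norm (u - v)^2 \<le> DIM('a) * h^2"
proof -
  have "((u - v) \<bullet> b)^2 \<le> h^2" if "b \<in> Basis" for b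
  proof -
    have "\<bar>(u - v) \<bullet> b\<bar> \<le> h"
      using abs_diff_le_if_floor_divide_eq[OF assms(1) assms(2)[OF that]] by (simp add: inner_diff_left)
    then have "\<bar>(u - v) \<bullet> b\<bar>^2 \<le> h^2" by (intro power_mono) auto
    then show ?thesis by simp
  qed
  then have "(\<Sum>b\<in>Basis. ((u - v) \<bullet> b)^2) \<le> (\<Sum>b\<in>(Basis::'a set). h^2)"
    by (intro sum_mono)
  moreover have "norm (u - v)^2 = (\<Sum>b\<in>Basis. ((u - v) \<bullet> b)^2)"
    unfolding power2_norm_eq_inner by (subst euclidean_inner) (simp add: power2_eq_square)
  ultimately show ?thesis by simp
qed

lemma finite_net_of_bounded_set:
  fixes V :: "'a::euclidean_space set" and c :: 'a and h :: real and m :: nat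
  assumes h: "h > 0" and V: "\<And>v. v \<in> V \<Longrightarrow> norm (v - c) \<le> m * h"
  obtains V' where "V' \<subseteq> V" "finite V'" "card V' \<le> (2 * m + 1) ^ DIM('a)"
    "\<And>v. v \<in> V \<Longrightarrow> \<exists>v'\<in>V'. norm (v - v')^2 \<le> DIM('a) * h^2"
proof -
  define cell where "cell v = restrict (\<lambda>b. \<lfloor>((v - c) \<bullet> b) / h\<rfloor>) Basis" for v
  define K where "K = PiE (Basis :: 'a set) (\<lambda>_. {- int m..int m})"
  have cell_K: "cell ` V \<subseteq> K"
  proof clarify
    fix v assume "v \<in> V"
    have "\<lfloor>((v - c) \<bullet> b) / h\<rfloor> \<in> {- int m..int m}" if "b \<in> Basis" for b
    proof -
      have "\<bar>(v - c) \<bullet> b\<bar> \<le> m * h"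
        using Basis_le_norm[OF that, of "v - c"] V[OF \<open>v \<in> V\<close>] by linarith
      then have "- real m \<le> ((v - c) \<bullet> b) / h" "((v - c) \<bullet> b) / h \<le> real m"
        using h by (simp_all add: abs_le_iff field_simps)
      then show ?thesis by (simp add: le_floor_iff floor_le_iff)
    qed
    then show "cell v \<in> K" by (auto simp: cell_def K_def)
  qed
  define rep where "rep k = (SOME v. v \<in> V \<and> cell v = k)" for k
  have rep: "rep k \<in> V \<and> cell (rep k) = k" if "k \<in> cell ` V" for k
  proof -
    from that obtain v where "v \<in> V \<and> cell v = k" by blast
    then show ?thesis unfolding rep_def by (rule someI)
  qed
  show ?thesis
  proof
    show "rep ` cell ` V \<subseteq> V" using rep by blast
    have "finite K" by (simp add: K_def finite_PiE)
    then show fin: "finite (rep ` cell ` V)" using cell_K finite_subset by blast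
    have "finite (cell ` V)" using cell_K \<open>finite K\<close> finite_subset by blast
    then have "card (rep ` cell ` V) \<le> card (cell ` V)" by (rule card_image_le)
    also have "\<dots> \<le> card K" using cell_K \<open>finite K\<close> by (rule card_mono[rotated])
    also have "card K = (2 * m + 1) ^ DIM('a)" by (simp add: K_def card_PiE nat_add_distrib nat_mult_distrib)
    finally show "card (rep ` cell ` V) \<le> (2 * m + 1) ^ DIM('a)" .
    fix v assume "v \<in> V"
    then have "cell (rep (cell v)) = cell v" using rep by blast
    then have "norm ((v - c) - (rep (cell v) - c))^2 \<le> DIM('a) * h^2"
      by (intro norm_diff_power2_le_if_floor_divide_eq[OF h]) (metis (no_types) cell_def restrict_apply')
    then show "\<exists>v'\<in>rep ` cell ` V. norm (v - v')^2 \<le> DIM('a) * h^2"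
      using \<open>v \<in> V\<close> by auto
  qed
qed

lemma power2_add_le_weighted:
  fixes a b e :: real
  assumes "e > 0"
  shows "(a + b)^2 \<le> (1 + e) * a^2 + (1 + 1 / e) * b^2"
proof -
  have "(1 + e) * a^2 + (1 + 1 / e) * b^2 - (a + b)^2 = (e * a - b)^2 / e"
    using assms by (simp add: field_simps power2_eq_square)
  also have "\<dots> \<ge> 0" using assms by simp
  finally show ?thesis by simp
qed

lemma power2_inner_le_mult:
  fixes x y :: "'a::real_inner"
  assumes "norm x \<le> a" "norm y \<le> b"
  shows "(x \<bullet> y)^2 \<le> (a * b)^2"
proof -
  have "norm x * norm y \<le> a * b"
    using assms by (intro mult_mono) (auto intro: order_trans[OF norm_ge_zero])
  then have "\<bar>x \<bullet> y\<bar> \<le> a * b"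
    using Cauchy_Schwarz_ineq2[of x y] by linarith
  then show ?thesis by (metis abs_ge_zero power2_abs power_mono)
qed

lemma power2_inner_le_truncated_plus:
  fixes x v v' :: "'a::real_inner" and r \<delta> :: real
  assumes x: "norm x \<le> 1" and v': "norm v' \<le> r" and v_v': "norm (v - v')^2 \<le> \<delta>"
  shows "(x \<bullet> v)^2 \<le> 7/5 * r^2 * min 1 ((x \<bullet> v')^2 / r^2) + 7/2 * \<delta>"
proof -
  have "(x \<bullet> v')^2 \<le> (1 * r)^2" by (rule power2_inner_le_mult[OF x v'])
  then have "r^2 * min 1 ((x \<bullet> v')^2 / r^2) = (x \<bullet> v')^2"
    by (cases "r = 0") (auto simp: min_def field_simps)
  moreover have "(x \<bullet> (v - v'))^2 \<le> \<delta>"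
    using power2_inner_le_mult[OF x order_refl, of "v - v'"] v_v' by simp
  moreover have "(x \<bullet> v)^2 \<le> 7/5 * (x \<bullet> v')^2 + 7/2 * (x \<bullet> (v - v'))^2"
    using power2_add_le_weighted[of "2/5" "x \<bullet> v'" "x \<bullet> (v - v')"] by (simp add: inner_diff_right)
  ultimately show ?thesis by linarith
qed

lemma sum_power2_inner_le_truncated_plus:
  fixes x :: "'i \<Rightarrow> 'a::real_inner" and v v' :: 'a and r \<delta> T :: real
  assumes "\<And>i. i \<in> I \<Longrightarrow> norm (x i) \<le> 1" "norm v' \<le> r" "norm (v - v')^2 \<le> \<delta>"
    and "(\<Sum>i\<in>I. min 1 ((x i \<bullet> v')^2 / r^2)) \<le> T"
  shows "(\<Sum>i\<in>I. (x i \<bullet> v)^2) \<le> 7/5 * r^2 * T + 7/2 * card I * \<delta>"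
proof -
  have "(\<Sum>i\<in>I. (x i \<bullet> v)^2) \<le> (\<Sum>i\<in>I. 7/5 * r^2 * min 1 ((x i \<bullet> v')^2 / r^2) + 7/2 * \<delta>)"
    using assms(1-3) by (intro sum_mono power2_inner_le_truncated_plus)
  also have "\<dots> = 7/5 * r^2 * (\<Sum>i\<in>I. min 1 ((x i \<bullet> v')^2 / r^2)) + 7/2 * card I * \<delta>"
    by (simp add: sum.distrib sum_distrib_left)
  also have "\<dots> \<le> 7/5 * r^2 * T + 7/2 * card I * \<delta>"
    using assms(4) by (intro add_right_mono mult_left_mono) auto
  finally show ?thesis .
qed

lemma integral_truncated_power2_inner_le:
  fixes P :: "'c measure" and X :: "'c \<Rightarrow> 'a::euclidean_space" and v :: 'a and r :: real
  assumes P: "prob_space P" and X: "X \<in> borel_measurable P"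
    and X_bounded: "AE z in P. norm (X z) \<le> 1" and v: "norm v \<le> r"
  shows "(\<integral>z. min 1 ((X z \<bullet> v)^2 / r^2) \<partial>P) \<le> (\<integral>z. (X z \<bullet> v)^2 \<partial>P) / r^2"
proof -
  interpret P: prob_space P by (rule P)
  have "(\<lambda>z. min 1 ((X z \<bullet> v)^2 / r^2)) \<in> borel_measurable P"
    using X by measurable
  then have "integrable P (\<lambda>z. min 1 ((X z \<bullet> v)^2 / r^2))"
    by (intro P.integrable_const_bound[where B=1]) auto
  moreover have "integrable P (\<lambda>z. (X z \<bullet> v)^2)"
  proof (rule P.integrable_const_bound[where B = "(1 * r)^2"])
    show "AE z in P. norm ((X z \<bullet> v)^2) \<le> (1 * r)^2"
      using X_bounded
    proof eventually_elim
      fix z assume "norm (X z) \<le> 1"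
      from power2_inner_le_mult[OF this v] show "norm ((X z \<bullet> v)^2) \<le> (1 * r)^2" by simp
    qed
  qed (use X in measurable)
  ultimately have "(\<integral>z. min 1 ((X z \<bullet> v)^2 / r^2) \<partial>P) \<le> (\<integral>z. (X z \<bullet> v)^2 / r^2 \<partial>P)"
    by (intro integral_mono) auto
  then show ?thesis by simp
qed

lemma sum_power2_inner_le_card_mult:
  fixes x :: "'i \<Rightarrow> 'a::real_inner" and r :: real
  assumes "\<And>i. i \<in> I \<Longrightarrow> norm (x i) \<le> 1" "norm v \<le> r"
  shows "(\<Sum>i\<in>I. (x i \<bullet> v)^2) \<le> card I * r^2"
proof -
  have "(\<Sum>i\<in>I. (x i \<bullet> v)^2) \<le> (\<Sum>i\<in>I. (1 * r)^2)"
    using assms by (intro sum_mono power2_inner_le_mult)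
  then show ?thesis by simp
qed

lemma uniform_truncated_sums_bound:
  fixes P :: "'c measure" and X :: "'c \<Rightarrow> 'a::euclidean_space" and V :: "'a set"
    and r \<sigma>2 t N :: real
  assumes P: "prob_space P" and I: "finite I" and X: "X \<in> borel_measurable P"
    and X_bounded: "AE z in P. norm (X z) \<le> 1"
    and V: "finite V" "real (card V) \<le> N" "N > 0"
    and V_bounded: "\<And>v. v \<in> V \<Longrightarrow> norm v \<le> r"
    and V_moment: "\<And>v. v \<in> V \<Longrightarrow> (\<integral>z. (X z \<bullet> v)^2 \<partial>P) \<le> \<sigma>2"
  shows "\<exists>E \<in> sets (PiM I (\<lambda>_. P)). measure (PiM I (\<lambda>_. P)) E \<ge> 1 - exp (- t) \<and>
     (\<forall>S\<in>E. (\<forall>i\<in>I. norm (X (S i)) \<le> 1) \<and>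
        (\<forall>v\<in>V. (\<Sum>i\<in>I. min 1 ((X (S i) \<bullet> v)^2 / r^2))
           \<le> (exp 1 - 1) * card I * (\<sigma>2 / r^2) + (t + ln N)))"
proof -
  let ?M = "PiM I (\<lambda>_. P)"
  interpret M: prob_space ?M by (rule prob_space_PiM) (use P in auto)
  define trunc where "trunc v z = min 1 ((X z \<bullet> v)^2 / r^2)" for v z
  have trunc_meas: "trunc v \<in> borel_measurable P" for v
    unfolding trunc_def using X by measurable
  have trunc_mean: "(\<integral>z. trunc v z \<partial>P) \<le> \<sigma>2 / r^2" if "v \<in> V" for v
    using integral_truncated_power2_inner_le[OF P X X_bounded V_bounded[OF that]] V_moment[OF that]
    unfolding trunc_def by (smt (verit) divide_right_mono zero_le_power2)
  define E where "E = {S \<in> space ?M. \<forall>f\<in>trunc ` V.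
    (\<Sum>i\<in>I. f (S i)) < (exp 1 - 1) * card I * (\<integral>z. f z \<partial>P) + (t + ln N)}"
  have E: "E \<in> sets ?M" "measure ?M E \<ge> 1 - exp (- t)"
    unfolding E_def using P I V trunc_meas card_image_le[OF V(1), of trunc]
    by (intro measure_PiM_sum_lt_for_finite_family; force simp: trunc_def)+
  define G where "G = {S \<in> space ?M. \<forall>i\<in>I. norm (X (S i)) \<le> 1}"
  have G: "G \<in> sets ?M" "AE S in ?M. S \<in> G"
    unfolding G_def using P I X X_bounded by (intro AE_PiM_all_components; measurable)+
  have "measure ?M (E \<inter> G) = measure ?M E"
    using E(1) G by (intro M.finite_measure_eq_AE) auto
  moreover have "(\<Sum>i\<in>I. trunc v (S i)) \<le> (exp 1 - 1) * card I * (\<sigma>2 / r^2) + (t + ln N)"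
    if "S \<in> E" "v \<in> V" for S v
  proof -
    have "(\<Sum>i\<in>I. trunc v (S i)) < (exp 1 - 1) * card I * (\<integral>z. trunc v z \<partial>P) + (t + ln N)"
      using that unfolding E_def by auto
    also have "\<dots> \<le> (exp 1 - 1) * card I * (\<sigma>2 / r^2) + (t + ln N)"
      using mult_left_mono[OF trunc_mean[OF that(2)], of "(exp 1 - 1) * card I"] by simp
    finally show ?thesis by simp
  qed
  ultimately show ?thesis
    using E G(1) by (intro bexI[of _ "E \<inter> G"]) (auto simp: G_def trunc_def)
qed

lemma uniform_sum_inner_power2_bound:
  fixes P :: "'c measure" and X :: "'c \<Rightarrow> 'a::euclidean_space"
    and U :: "'a set" and w0 :: 'a and r \<sigma>2 t :: real and n :: nat
  assumes P: "prob_space P" and X: "X \<in> borel_measurable P"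
    and X_bounded: "AE z in P. norm (X z) \<le> 1"
    and r: "r > 0" and n: "n \<ge> 1"
    and U_bounded: "\<And>w. w \<in> U \<Longrightarrow> norm (w - w0) \<le> r"
    and U_moment: "\<And>w. w \<in> U \<Longrightarrow> (\<integral>z. (X z \<bullet> (w - w0))^2 \<partial>P) \<le> \<sigma>2"
  shows "\<exists>E \<in> sets (PiM {..<n} (\<lambda>_. P)). measure (PiM {..<n} (\<lambda>_. P)) E \<ge> 1 - exp (- t) \<and>
     (\<forall>S\<in>E. (\<forall>i<n. norm (X (S i)) \<le> 1) \<and>
        (\<forall>w\<in>U. (\<Sum>i<n. (X (S i) \<bullet> (w - w0))^2)
           \<le> 7/5 * ((exp 1 - 1) * n * \<sigma>2 + r^2 * (t + DIM('a) * ln (2 * n + 1)))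
              + 7/2 * DIM('a) * r^2 / n))"
proof -
  let ?D = "real DIM('a)"
  have "r / n > 0" using r n by simp
  then obtain U' where U': "U' \<subseteq> U" "finite U'" "card U' \<le> (2 * n + 1) ^ DIM('a)"
    and net: "\<And>w. w \<in> U \<Longrightarrow> \<exists>w'\<in>U'. norm (w - w')^2 \<le> ?D * (r / n)^2"
    using finite_net_of_bounded_set[of "r / n" U w0 n] U_bounded n by auto
  let ?V = "(\<lambda>w. w - w0) ` U'"
  have "card ?V \<le> (2 * n + 1) ^ DIM('a)" using card_image_le[OF U'(2)] U'(3) order_trans by blast
  then have V_card: "real (card ?V) \<le> real ((2 * n + 1) ^ DIM('a))" by (simp only: of_nat_le_iff)
  have V_bounded: "\<And>v. v \<in> ?V \<Longrightarrow> norm v \<le> r" using U'(1) U_bounded by auto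
  have V_moment: "\<And>v. v \<in> ?V \<Longrightarrow> (\<integral>z. (X z \<bullet> v)^2 \<partial>P) \<le> \<sigma>2" using U'(1) U_moment by auto
  obtain E where E: "E \<in> sets (PiM {..<n} (\<lambda>_. P))"
      "measure (PiM {..<n} (\<lambda>_. P)) E \<ge> 1 - exp (- t)"
    and E_norm: "\<And>S i. S \<in> E \<Longrightarrow> i < n \<Longrightarrow> norm (X (S i)) \<le> 1"
    and E_sums: "\<And>S w'. S \<in> E \<Longrightarrow> w' \<in> U' \<Longrightarrow> (\<Sum>i<n. min 1 ((X (S i) \<bullet> (w' - w0))^2 / r^2))
      \<le> (exp 1 - 1) * n * (\<sigma>2 / r^2) + (t + ?D * ln (2 * n + 1))"
    using uniform_truncated_sums_bound[OF P finite_lessThan[of n] X X_bounded finite_imageI[OF U'(2)]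
        V_card _ V_bounded V_moment, of t]
    by (auto simp: ln_realpow)
  have "(\<Sum>i<n. (X (S i) \<bullet> (w - w0))^2)
      \<le> 7/5 * ((exp 1 - 1) * n * \<sigma>2 + r^2 * (t + ?D * ln (2 * n + 1))) + 7/2 * ?D * r^2 / n"
    if S: "S \<in> E" and w: "w \<in> U" for S w
  proof -
    obtain w' where w': "w' \<in> U'" "norm ((w - w0) - (w' - w0))^2 \<le> ?D * (r / n)^2"
      using net[OF w] by auto
    have "(\<Sum>i<n. (X (S i) \<bullet> (w - w0))^2)
        \<le> 7/5 * r^2 * ((exp 1 - 1) * n * (\<sigma>2 / r^2) + (t + ?D * ln (2 * n + 1)))
          + 7/2 * n * (?D * (r / n)^2)"
      using sum_power2_inner_le_truncated_plus[OF _ _ w'(2) E_sums[OF S w'(1)]]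
        E_norm[OF S] U_bounded w'(1) U'(1) by auto
    also have "\<dots> = 7/5 * ((exp 1 - 1) * n * \<sigma>2 + r^2 * (t + ?D * ln (2 * n + 1)))
        + 7/2 * ?D * r^2 / n"
      using r n by (simp add: field_simps power2_eq_square)
    finally show ?thesis .
  qed
  then show ?thesis using E E_norm by blast
qed

lemma ln_ge_of_e_bound_power_le:
  fixes a :: real and k m :: nat
  assumes "m > 0" "a > 0" "(272/100) ^ k \<le> a ^ m"
  shows "k / m \<le> ln a"
proof -
  have "exp (k / m) ^ m = exp (m * (k / m))" by (rule exp_of_nat_mult[symmetric])
  also have "real m * (k / m) = real k * 1" using assms(1) by simp
  also have "exp (real k * 1) = exp 1 ^ k" by (rule exp_of_nat_mult)
  also have "\<dots> \<le> (272/100) ^ k" using e_less_272 by (intro power_mono) auto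
  also have "\<dots> \<le> a ^ m" by (rule assms(3))
  finally have "exp (k / m) \<le> a"
    using assms(1,2) power_mono_iff[of "exp (k / m)" a m] by simp
  then show ?thesis using assms(2) by (simp add: ln_ge_iff)
qed

lemma two_mul_le_five_mul_one_plus_ln:
  fixes n :: nat
  assumes "1 \<le> n" "n \<le> 7"
  shows "2 * real n \<le> 5 * (1 + ln n)"
proof -
  have "n \<in> {1, 2, 3, 4, 5, 6, 7}" using assms by auto
  moreover have "1 \<le> ln (3::real)" "1 \<le> ln (4::real)" "1 \<le> ln (5::real)"
    using ln_ge_of_e_bound_power_le[of 1 _ 1] by simp_all
  moreover have "7/5 \<le> ln (6::real)" using ln_ge_of_e_bound_power_le[of 5 6 7] by (simp add: power_divide)
  moreover have "9/5 \<le> ln (7::real)" using ln_ge_of_e_bound_power_le[of 5 7 9] by (simp add: power_divide)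
  ultimately show ?thesis by auto
qed

lemma ln_two_mul_plus_one_le:
  fixes n :: nat
  assumes "8 \<le> n"
  shows "7/5 * ln (2 * real n + 1) + 7 / (2 * real n) \<le> 5/2 * ln n"
proof -
  have n: "real n \<ge> 8" using assms by simp
  have "2 \<le> ln (8::real)" using ln_ge_of_e_bound_power_le[of 1 8 2] by (simp add: power_divide)
  also have "\<dots> \<le> ln n" using n by simp
  finally have ln_n: "2 \<le> ln n" .
  have "2 * real n + 1 = n * (2 + 1 / n)" using n by (simp add: field_simps)
  then have "ln (2 * real n + 1) = ln n + ln (2 + 1 / n)"
    using n by (simp add: ln_mult_pos add_pos_nonneg)
  also have "ln (2 + 1 / n) \<le> 1 + 1 / n"
    using ln_le_minus_one[of "2 + 1 / n"] by (simp add: add_pos_nonneg)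
  also have "1 / real n \<le> 1 / 8" using n by (simp add: field_simps)
  finally have "ln (2 * real n + 1) \<le> ln n + 9 / 8" by simp
  moreover have "7 / (2 * real n) \<le> 7 / 16" using n by (simp add: field_simps)
  ultimately show ?thesis using ln_n by linarith
qed

lemma crude_bound_le_rate_if_le_7:
  fixes R \<rho> t D :: real and n :: nat
  assumes "1 \<le> n" "n \<le> 7" "t \<ge> 0" "D \<ge> 1"
  shows "n * (2 * R)^2 \<le> n * (10 * R^2 * (\<rho>^2 + (t + 1 + D * ln n) / n))"
proof -
  have "ln n \<le> D * ln n" using assms(1,4) by (simp add: mult_le_cancel_right1)
  moreover have "0 \<le> real n * \<rho>^2" by simp
  ultimately have "2 * real n \<le> 5 * (n * \<rho>^2 + t + 1 + D * ln n)"
    using two_mul_le_five_mul_one_plus_ln[OF assms(1,2)] assms(3) by (smt (verit))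
  have "n * (2 * R)^2 = 2 * R^2 * (2 * real n)" by (simp add: power2_eq_square)
  also have "\<dots> \<le> 2 * R^2 * (5 * (n * \<rho>^2 + t + 1 + D * ln n))"
    using \<open>2 * real n \<le> _\<close> by (intro mult_left_mono) auto
  also have "\<dots> = n * (10 * R^2 * (\<rho>^2 + (t + 1 + D * ln n) / n))"
    using assms(1) by (simp add: field_simps)
  finally show ?thesis .
qed

lemma net_bound_le_rate_if_8_le:
  fixes R \<rho> t D :: real and n :: nat
  assumes "8 \<le> n" "t \<ge> 0" "D \<ge> 1"
  shows "7/5 * ((exp 1 - 1) * n * (2 * R * \<rho>)^2 + (2 * R)^2 * (t + D * ln (2 * n + 1)))
           + 7/2 * D * (2 * R)^2 / n
         \<le> n * (10 * R^2 * (\<rho>^2 + (t + 1 + D * ln n) / n))"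
proof -
  have "28/5 * (exp 1 - 1) \<le> (10::real)" using e_less_272 by simp
  then have \<rho>_part: "28/5 * (exp 1 - 1) * (n * \<rho>^2) \<le> 10 * (n * \<rho>^2)"
    by (intro mult_right_mono) auto
  have "D * (7/5 * ln (2 * real n + 1) + 7 / (2 * real n)) \<le> D * (5/2 * ln n)"
    using ln_two_mul_plus_one_le[OF assms(1)] assms(3) by (intro mult_left_mono) auto
  then have D_part: "28/5 * D * ln (2 * real n + 1) + 14 * D / n \<le> 10 * D * ln n"
    using assms(1) by (simp add: field_simps)
  have "28/5 * ((exp 1 - 1) * n * \<rho>^2 + (t + D * ln (2 * n + 1))) + 14 * D / n
      \<le> 10 * (n * \<rho>^2 + t + 1 + D * ln n)"
    using \<rho>_part D_part assms(2) by (simp add: algebra_simps)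
  then have "R^2 * (28/5 * ((exp 1 - 1) * n * \<rho>^2 + (t + D * ln (2 * n + 1))) + 14 * D / n)
      \<le> R^2 * (10 * (n * \<rho>^2 + t + 1 + D * ln n))"
    by (intro mult_left_mono) auto
  moreover have "7/5 * ((exp 1 - 1) * n * (2 * R * \<rho>)^2 + (2 * R)^2 * (t + D * ln (2 * n + 1)))
           + 7/2 * D * (2 * R)^2 / n
      = R^2 * (28/5 * ((exp 1 - 1) * n * \<rho>^2 + (t + D * ln (2 * n + 1))) + 14 * D / n)"
    by (simp add: power_mult_distrib algebra_simps)
  moreover have "n * (10 * R^2 * (\<rho>^2 + (t + 1 + D * ln n) / n))
      = R^2 * (10 * (n * \<rho>^2 + t + 1 + D * ln n))"
    using assms(1) by (simp add: field_simps)
  ultimately show ?thesis by linarith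
qed

lemma sum_power2_inner_le_rate:
  fixes x :: "nat \<Rightarrow> 'a::real_inner" and R \<rho> t D :: real and n :: nat
  assumes n: "n \<ge> 1" and t: "t \<ge> 0" and D: "D \<ge> 1"
    and x: "\<And>i. i < n \<Longrightarrow> norm (x i) \<le> 1" and v: "norm v \<le> 2 * R"
    and net_bound: "(\<Sum>i<n. (x i \<bullet> v)^2)
      \<le> 7/5 * ((exp 1 - 1) * n * (2 * R * \<rho>)^2 + (2 * R)^2 * (t + D * ln (2 * n + 1)))
         + 7/2 * D * (2 * R)^2 / n"
  shows "(\<Sum>i<n. (x i \<bullet> v)^2) \<le> n * (10 * R^2 * (\<rho>^2 + (t + 1 + D * ln n) / n))"
proof (cases "n \<le> 7")
  case True
  have "(\<Sum>i<n. (x i \<bullet> v)^2) \<le> n * (2 * R)^2"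
    using sum_power2_inner_le_card_mult[of "{..<n}" x v "2 * R"] x v by simp
  also have "\<dots> \<le> n * (10 * R^2 * (\<rho>^2 + (t + 1 + D * ln n) / n))"
    by (rule crude_bound_le_rate_if_le_7[OF n True t D])
  finally show ?thesis .
next
  case False
  then show ?thesis using net_bound net_bound_le_rate_if_8_le[OF _ t D, of n R \<rho>] by simp
qed

lemma inverse_mult_SUP_le:
  fixes g :: "'b \<Rightarrow> real" and n B :: real
  assumes "U \<noteq> {}" "n > 0" "\<And>w. w \<in> U \<Longrightarrow> g w \<le> n * B"
  shows "(1 / n) * (SUP w \<in> U. g w) \<le> B"
proof -
  have "(SUP w \<in> U. g w) \<le> n * B" using assms by (intro cSUP_least) auto
  then show ?thesis using assms(2) by (simp add: field_simps)
qed

lemma second_moment_le_of_rho_dist_le: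
  fixes P :: "('a::euclidean_space \<times> real) measure"
  assumes "R > 0" "rho_dist P R wstar w \<le> \<rho>"
  shows "(\<integral>z. (fst z \<bullet> (w - wstar))^2 \<partial>P) \<le> (2 * R * \<rho>)^2"
proof -
  let ?I = "\<integral>z. (fst z \<bullet> (w - wstar))^2 \<partial>P"
  have "sqrt ?I \<le> 2 * R * \<rho>"
    using assms by (simp add: rho_dist_def field_simps)
  moreover have "?I \<ge> 0" by simp
  ultimately show ?thesis
    by (metis real_sqrt_ge_zero power_mono real_sqrt_pow2)
qed

theorem lemma2:
  fixes P :: "('a::euclidean_space \<times> real) measure"
    and l :: "real \<Rightarrow> real"
    and R \<alpha> G \<rho> t :: real and n :: nat and wstar :: 'a
  assumes P_prob: "prob_space P"
    and P_sets: "sets P = sets borel"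
    and P_supp: "AE z in P. norm (fst z) \<le> 1 \<and> \<bar>snd z\<bar> \<le> 1"
    and R_pos: "R > 0"
    and l_nonneg: "\<forall>z. l z \<ge> 0"
    and l_convex: "convex_on UNIV l"
    and alpha_pos: "\<alpha> > 0"
    and l_expconc: "concave_on {-R..R} (\<lambda>z. exp (- \<alpha> * l z))"
    and l_lip: "G-lipschitz_on UNIV l"
    and wstar_in: "norm wstar \<le> R"
    and wstar_min: "\<forall>w. norm w \<le> R \<longrightarrow> exp_risk P l wstar \<le> exp_risk P l w"
    and rho_pos: "\<rho> > 0"
    and t_pos: "t > 0"
    and n_pos: "n \<ge> 1"
  shows "\<exists>E \<in> sets (PiM {..<n} (\<lambda>_. P)).
           measure (PiM {..<n} (\<lambda>_. P)) E \<ge> 1 - exp (- t) \<and>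
           (\<forall>S \<in> E.
              (1 / real n) * (SUP w \<in> {w. norm w \<le> R \<and> rho_dist P R wstar w \<le> \<rho>}.
                  (\<Sum>i<n. (fst (S i) \<bullet> (w - wstar))^2))
              \<le> 10 * R^2 * (\<rho>^2 + (t + 1 + real DIM('a) * ln (real n)) / real n))"
proof -
  let ?M = "PiM {..<n} (\<lambda>_. P)"
  let ?U = "{w. norm w \<le> R \<and> rho_dist P R wstar w \<le> \<rho>}"
  have fst_meas: "fst \<in> borel_measurable P"
    by (simp add: measurable_cong_sets[OF P_sets refl] borel_measurable_continuous_onI continuous_on_fst)
  have U_bounded: "norm (w - wstar) \<le> 2 * R" if "w \<in> ?U" for w
    using that wstar_in norm_triangle_ineq4[of w wstar] by auto
  have X_bounded: "AE z in P. norm (fst z) \<le> 1" using P_supp by auto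
  have U_moment: "(\<integral>z. (fst z \<bullet> (w - wstar))^2 \<partial>P) \<le> (2 * R * \<rho>)^2" if "w \<in> ?U" for w
    using that by (intro second_moment_le_of_rho_dist_le[OF R_pos]) simp
  obtain E where E: "E \<in> sets ?M" "measure ?M E \<ge> 1 - exp (- t)"
    and E_norm: "\<And>S i. S \<in> E \<Longrightarrow> i < n \<Longrightarrow> norm (fst (S i)) \<le> 1"
    and E_net: "\<And>S w. S \<in> E \<Longrightarrow> w \<in> ?U \<Longrightarrow> (\<Sum>i<n. (fst (S i) \<bullet> (w - wstar))^2)
      \<le> 7/5 * ((exp 1 - 1) * n * (2 * R * \<rho>)^2 + (2 * R)^2 * (t + DIM('a) * ln (2 * n + 1)))
         + 7/2 * DIM('a) * (2 * R)^2 / n"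
    using uniform_sum_inner_power2_bound[where U = ?U and t = t,
        OF P_prob fst_meas X_bounded _ n_pos U_bounded U_moment] R_pos by auto
  have "DIM('a) \<ge> 1" using DIM_positive[where 'a='a] by linarith
  moreover have "wstar \<in> ?U" using wstar_in rho_pos by (simp add: rho_dist_def)
  ultimately show ?thesis
    using E E_norm E_net U_bounded n_pos t_pos
    by (intro bexI[of _ E] conjI ballI inverse_mult_SUP_le sum_power2_inner_le_rate) auto
qed

end
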